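(* For terms $\Gamma\vdash s,t:X$ of the language $\mathbf{PSL}$, $s\approx_{\mathbf{PSL}}t$ if and only if $[\![s]\!]\propto[\![t]\!]$, i.e. there is $\lambda>0$ with $[\![s]\!](y|\gamma)=\lambda[\![t]\!](y|\gamma)$ for all $\gamma,y$. That is, $\mathrm{FinProjStoch}$ is fully abstract for $\mathbf{PSL}$.
   Context: $\mathbf{PSL}$ is the following first-order language. Types: $A::=X\mid\mathsf{unit}\mid A\ast A$ where $X$ ranges over finite sets. Terms: $t::=x\mid()\mid(t,t)\mid\pi_i t\mid \underline f(t)\mid\mathrm{let}\ x=t_1\ \mathrm{in}\ t_2$, where $\underline f:A\to B$ ranges over all subprobability kernels between the finite sets interpreting $A$ and $B$ (this includes exact conditioning $(=:=):X\times X\to D_{\le1}(1)$, $(x,y)\mapsto[x=y]$); typing is the usual one ($\Gamma\vdash \underline f(t):B$ if $\Gamma\vdash t:A$; let binds $x$ in $t_2$; $\pi_i$ projects from pairs). Types denote finite sets ($[\![\mathsf{unit}]\!]=\{*\}$, $[\![A\ast B]\!]=[\![A]\!]\times[\![B]\!]$, contexts by products), and a term $\Gamma\vdash t:A$ denotes a subprobability kernel $[\![t]\!](a|\gamma)$: $[\![x]\!](a|\gamma)=[a=\gamma_x]$; $[\![()]\!]( *|\gamma)=1$; $[\![(s,t)]\!]((a,b)|\gamma)=[\![s]\!](a|\gamma)[\![t]\!](b|\gamma)$; $[\![\pi_1t]\!](a|\gamma)=\sum_b[\![t]\!]((a,b)|\gamma)$ (similarly $\pi_2$); $[\![\underline f(t)]\!](b|\gamma)=\sum_a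 f(b|a)[\![t]\!](a|\gamma)$; $[\![\mathrm{let}\ x=s\ \mathrm{in}\ t]\!](b|\gamma)=\sum_a[\![s]\!](a|\gamma)[\![t]\!](b|\gamma,a)$. For a subdistribution $\varphi$ on a finite set, $\mathsf{normalize}(\varphi)=\varphi/Z$ with $Z=\sum_x\varphi(x)$ if $Z\neq0$, and $0$ otherwise. Closed programs $s,t$ are observationally equivalent, $s\approx t$, if $\mathsf{normalize}([\![s]\!])=\mathsf{normalize}([\![t]\!])$. Open terms $s,t$ are straight-line equivalent, $s\approx_{\mathbf{PSL}}t$, if $C[s]\approx C[t]$ for every closed well-typed $\mathbf{PSL}$ context $C[-]$ (a term with a hole, possibly binding the free variables of the hole). *)

theory Defs
  imports Complex_Main
begin

text \<open>Base types: a finite set X is represented (up to bijection) by Fin n, denoting {0..<n}.\<close>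
datatype ty = Fin nat | TUnit | Prod ty ty

datatype val = VBase nat | VUnit | VPair val val

fun den :: "ty \<Rightarrow> val set" where
  "den (Fin n) = VBase ` {..<n}"
| "den TUnit = {VUnit}"
| "den (Prod A B) = {VPair a b | a b. a \<in> den A \<and> b \<in> den B}"

text \<open>Kernels are f :: input \<Rightarrow> output \<Rightarrow> real, i.e. f a b = f(b|a).
  Terms may contain a Hole (used only for contexts).\<close>
datatype tm =
    Var nat
  | TmUnit
  | TmPair tm tm
  | Fst ty tm
  | Snd ty tm
  | Prim ty ty "val \<Rightarrow> val \<Rightarrow> real" tm
  | Let ty tm tm
  | Hole

text \<open>Fst B t, Snd A t: projections of t : A * B.  Prim A B f t: f(t) for a kernel f from A to B.
  Let A t1 t2: let x = t1 in t2, with x : A being de Bruijn index 0 in t2.\<close>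

definition subprob_kernel :: "ty \<Rightarrow> ty \<Rightarrow> (val \<Rightarrow> val \<Rightarrow> real) \<Rightarrow> bool" where
  "subprob_kernel A B f \<longleftrightarrow>
     (\<forall>a\<in>den A. \<forall>b\<in>den B. 0 \<le> f a b) \<and> (\<forall>a\<in>den A. (\<Sum>b\<in>den B. f a b) \<le> 1)"

text \<open>Typing. The parameter H is None for ordinary terms and Some (Gamma, X) for contexts
  whose hole has type Gamma |- - : X.\<close>
inductive has_type :: "(ty list \<times> ty) option \<Rightarrow> ty list \<Rightarrow> tm \<Rightarrow> ty \<Rightarrow> bool" where
  T_Var: "i < length \<Gamma> \<Longrightarrow> has_type H \<Gamma> (Var i) (\<Gamma> ! i)"
| T_Unit: "has_type H \<Gamma> TmUnit TUnit"
| T_Pair: "has_type H \<Gamma> s A \<Longrightarrow> has_type H \<Gamma> t B \<Longrightarrow> has_type H \<Gamma> (TmPair s t) (Prod A B)"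
| T_Fst: "has_type H \<Gamma> t (Prod A B) \<Longrightarrow> has_type H \<Gamma> (Fst B t) A"
| T_Snd: "has_type H \<Gamma> t (Prod A B) \<Longrightarrow> has_type H \<Gamma> (Snd A t) B"
| T_Prim: "subprob_kernel A B f \<Longrightarrow> has_type H \<Gamma> t A \<Longrightarrow> has_type H \<Gamma> (Prim A B f t) B"
| T_Let: "has_type H \<Gamma> t1 A \<Longrightarrow> has_type H (A # \<Gamma>) t2 B \<Longrightarrow> has_type H \<Gamma> (Let A t1 t2) B"
| T_Hole: "has_type (Some (\<Gamma>, A)) \<Gamma> Hole A"

fun holes :: "tm \<Rightarrow> nat" where
  "holes Hole = 1"
| "holes (TmPair s t) = holes s + holes t"
| "holes (Fst B t) = holes t"
| "holes (Snd A t) = holes t"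
| "holes (Prim A B f t) = holes t"
| "holes (Let A s t) = holes s + holes t"
| "holes _ = 0"

text \<open>Plugging (capturing: the enclosing lets bind the free variables of the hole).\<close>
fun plug :: "tm \<Rightarrow> tm \<Rightarrow> tm" where
  "plug Hole s = s"
| "plug (TmPair a b) s = TmPair (plug a s) (plug b s)"
| "plug (Fst B t) s = Fst B (plug t s)"
| "plug (Snd A t) s = Snd A (plug t s)"
| "plug (Prim A B f t) s = Prim A B f (plug t s)"
| "plug (Let A a b) s = Let A (plug a s) (plug b s)"
| "plug t s = t"

section \<open>Semantics: sem t gamma v = [[t]](v|gamma)\<close>

fun sem :: "tm \<Rightarrow> val list \<Rightarrow> val \<Rightarrow> real" where
  "sem (Var i) \<gamma> v = (if v = \<gamma> ! i then 1 else 0)"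
| "sem TmUnit \<gamma> v = (if v = VUnit then 1 else 0)"
| "sem (TmPair s t) \<gamma> v = (case v of VPair a b \<Rightarrow> sem s \<gamma> a * sem t \<gamma> b | _ \<Rightarrow> 0)"
| "sem (Fst B t) \<gamma> a = (\<Sum>b\<in>den B. sem t \<gamma> (VPair a b))"
| "sem (Snd A t) \<gamma> b = (\<Sum>a\<in>den A. sem t \<gamma> (VPair a b))"
| "sem (Prim A B f t) \<gamma> b = (\<Sum>a\<in>den A. f a b * sem t \<gamma> a)"
| "sem (Let A s t) \<gamma> b = (\<Sum>a\<in>den A. sem s \<gamma> a * sem t (a # \<gamma>) b)"
| "sem Hole \<gamma> v = 0"

definition den_ctx :: "ty list \<Rightarrow> val list set" where
  "den_ctx \<Gamma> = {\<gamma>. length \<gamma> = length \<Gamma> \<and> (\<forall>i<length \<Gamma>. \<gamma> ! i \<in> den (\<Gamma> ! i))}"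

definition normalize :: "(val \<Rightarrow> real) \<Rightarrow> val set \<Rightarrow> val \<Rightarrow> real" where
  "normalize \<phi> S x = (let Z = (\<Sum>y\<in>S. \<phi> y) in if Z \<noteq> 0 then \<phi> x / Z else 0)"

definition obs_equiv :: "ty \<Rightarrow> tm \<Rightarrow> tm \<Rightarrow> bool" where
  "obs_equiv A s t \<longleftrightarrow>
     (\<forall>v\<in>den A. normalize (sem s []) (den A) v = normalize (sem t []) (den A) v)"

definition psl_equiv :: "ty list \<Rightarrow> ty \<Rightarrow> tm \<Rightarrow> tm \<Rightarrow> bool" where
  "psl_equiv \<Gamma> X s t \<longleftrightarrow>
     (\<forall>C A. has_type (Some (\<Gamma>, X)) [] C A \<and> holes C = 1 \<longrightarrow> obs_equiv A (plug C s) (plug C t))"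

end

theory Submission
  imports Defs
begin

text \<open>Plugging into a context is linear in the plugged term, so proportional kernels stay
  proportional, and proportional subdistributions have equal normalisations. Conversely, the
  context that samples every variable of \<open>\<Gamma>\<close> uniformly and returns the tuple of samples together
  with the output of the hole denotes \<open>w * [[s]](y|\<gamma>)\<close> at \<open>(\<gamma>, y)\<close>, with a weight \<open>w > 0\<close>
  independent of \<open>\<gamma>\<close> and \<open>y\<close>; nonnegative subdistributions with equal normalisations are
  proportional, hence so are \<open>[[s]]\<close> and \<open>[[t]]\<close>.\<close>

definition proportional :: "'a set \<Rightarrow> ('a \<Rightarrow> real) \<Rightarrow> ('a \<Rightarrow> real) \<Rightarrow> bool" where
  "proportional S f g \<longleftrightarrow> (\<exists>c>0. \<forall>x\<in>S. f x = c * g x)"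

lemma normalize_eq_if_proportional:
  assumes "proportional S f g" and "x \<in> S"
  shows "normalize f S x = normalize g S x"
proof -
  obtain c where c: "c > 0" and fg: "\<forall>x\<in>S. f x = c * g x"
    using assms(1) by (auto simp: proportional_def)
  have "(\<Sum>y\<in>S. f y) = c * (\<Sum>y\<in>S. g y)"
    using fg by (simp add: sum_distrib_left)
  then show ?thesis
    using c fg assms(2) by (simp add: normalize_def Let_def)
qed

lemma proportional_if_normalize_eq:
  assumes "finite S" and f_nonneg: "\<forall>x\<in>S. 0 \<le> f x" and g_nonneg: "\<forall>x\<in>S. 0 \<le> g x"
    and norm_eq: "\<forall>x\<in>S. normalize f S x = normalize g S x"
  shows "proportional S f g"
proof -
  define Zf where "Zf = (\<Sum>x\<in>S. f x)"
  define Zg where "Zg = (\<Sum>x\<in>S. g x)"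
  have zero_iff: "Zf = 0 \<longleftrightarrow> Zg = 0"
  proof
    assume "Zf = 0"
    then have "\<forall>x\<in>S. normalize g S x = 0"
      using norm_eq by (simp add: normalize_def Let_def Zf_def)
    then show "Zg = 0"
      by (cases "Zg = 0") (auto simp: normalize_def Let_def Zg_def)
  next
    assume "Zg = 0"
    then have "\<forall>x\<in>S. normalize f S x = 0"
      using norm_eq by (simp add: normalize_def Let_def Zg_def)
    then show "Zf = 0"
      by (cases "Zf = 0") (auto simp: normalize_def Let_def Zf_def)
  qed
  show ?thesis
  proof (cases "Zf = 0")
    case True
    then have "\<forall>x\<in>S. f x = 0 \<and> g x = 0"
      using zero_iff sum_nonneg_eq_0_iff[OF \<open>finite S\<close>] f_nonneg g_nonneg
      unfolding Zf_def Zg_def by blast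
    then show ?thesis
      unfolding proportional_def by (intro exI[of _ 1]) simp
  next
    case False
    then have "Zf > 0" "Zg > 0"
      using zero_iff f_nonneg g_nonneg unfolding Zf_def Zg_def
      by (auto simp: order_less_le sum_nonneg)
    moreover have "\<forall>x\<in>S. f x = Zf / Zg * g x"
      using norm_eq False zero_iff
      by (auto simp: normalize_def Let_def Zf_def[symmetric] Zg_def[symmetric] field_simps)
    ultimately show ?thesis
      unfolding proportional_def by (intro exI[of _ "Zf / Zg"]) simp
  qed
qed

lemma finite_den: "finite (den A)"
proof (induction A)
  case (Prod A B)
  have "den (Prod A B) = (\<lambda>(a, b). VPair a b) ` (den A \<times> den B)"
    by auto
  then show ?case
    using Prod by simp
qed auto

lemma den_ctx_Nil: "den_ctx [] = {[]}"
  by (auto simp: den_ctx_def)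

lemma Cons_in_den_ctx_iff: "a # \<gamma> \<in> den_ctx (A # \<Gamma>) \<longleftrightarrow> a \<in> den A \<and> \<gamma> \<in> den_ctx \<Gamma>"
  by (auto simp: den_ctx_def nth_Cons' split: if_splits)

lemma den_ctx_Cons: "den_ctx (A # \<Gamma>) = (\<lambda>(a, \<gamma>). a # \<gamma>) ` (den A \<times> den_ctx \<Gamma>)"
proof -
  have "\<exists>a \<gamma>. x = a # \<gamma>" if "x \<in> den_ctx (A # \<Gamma>)" for x
    using that by (cases x) (auto simp: den_ctx_def)
  then show ?thesis
    using Cons_in_den_ctx_iff by fastforce
qed

lemma finite_den_ctx: "finite (den_ctx \<Gamma>)"
  by (induction \<Gamma>) (auto simp: den_ctx_Nil den_ctx_Cons finite_den)

lemma sum_den_ctx_Cons: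
  "(\<Sum>\<gamma>\<in>den_ctx (A # \<Gamma>). f \<gamma>) = (\<Sum>\<gamma>\<in>den_ctx \<Gamma>. \<Sum>a\<in>den A. f (a # \<gamma>))"
proof -
  have "inj_on (\<lambda>(a, \<gamma>). a # \<gamma>) (den A \<times> den_ctx \<Gamma>)"
    by (auto simp: inj_on_def)
  then have "(\<Sum>\<gamma>\<in>den_ctx (A # \<Gamma>). f \<gamma>) = (\<Sum>(a, \<gamma>)\<in>den A \<times> den_ctx \<Gamma>. f (a # \<gamma>))"
    unfolding den_ctx_Cons by (subst sum.reindex) (simp_all add: case_prod_unfold)
  also have "\<dots> = (\<Sum>a\<in>den A. \<Sum>\<gamma>\<in>den_ctx \<Gamma>. f (a # \<gamma>))"
    by (simp add: sum.cartesian_product)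
  also have "\<dots> = (\<Sum>\<gamma>\<in>den_ctx \<Gamma>. \<Sum>a\<in>den A. f (a # \<gamma>))"
    by (rule sum.swap)
  finally show ?thesis .
qed

lemma sem_nonneg:
  "has_type H \<Gamma> t A \<Longrightarrow> \<gamma> \<in> den_ctx \<Gamma> \<Longrightarrow> v \<in> den A \<Longrightarrow> 0 \<le> sem t \<gamma> v"
proof (induction arbitrary: \<gamma> v rule: has_type.induct)
  case (T_Prim A B f H \<Gamma> t)
  then show ?case
    by (auto intro!: sum_nonneg simp: subprob_kernel_def)
next
  case (T_Let H \<Gamma> t1 A t2 B)
  then show ?case
    by (auto intro!: sum_nonneg simp: Cons_in_den_ctx_iff)
qed (auto intro!: sum_nonneg)

lemma has_type_plug:
  "has_type (Some (\<Gamma>, X)) \<Delta> C A \<Longrightarrow> has_type None \<Gamma> s X \<Longrightarrow> has_type None \<Delta> (plug C s) A"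
  by (induction "Some (\<Gamma>, X)" \<Delta> C A rule: has_type.induct) (auto intro: has_type.intros)

lemma plug_no_holes: "holes C = 0 \<Longrightarrow> plug C s = C"
  by (induction C) auto

lemma sem_plug_scale:
  assumes "has_type (Some (\<Gamma>, X)) \<Delta> C A" and "holes C = 1"
    and "\<forall>\<gamma>\<in>den_ctx \<Gamma>. \<forall>y\<in>den X. sem s \<gamma> y = c * sem t \<gamma> y"
    and "\<delta> \<in> den_ctx \<Delta>" and "v \<in> den A"
  shows "sem (plug C s) \<delta> v = c * sem (plug C t) \<delta> v"
  using assms
proof (induction "Some (\<Gamma>, X)" \<Delta> C A arbitrary: \<delta> v rule: has_type.induct)
  case (T_Pair \<Delta> C1 A C2 B)
  then obtain a b where "v = VPair a b" "a \<in> den A" "b \<in> den B"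
    by auto
  moreover have "holes C1 = 1 \<and> holes C2 = 0 \<or> holes C1 = 0 \<and> holes C2 = 1"
    using T_Pair.prems by auto
  ultimately show ?case
    using T_Pair by (auto simp: plug_no_holes)
next
  case (T_Let \<Delta> C1 A C2 B)
  have "holes C1 = 1 \<and> holes C2 = 0 \<or> holes C1 = 0 \<and> holes C2 = 1"
    using T_Let.prems by auto
  then show ?case
    using T_Let
    by (auto simp: plug_no_holes sum_distrib_left Cons_in_den_ctx_iff intro!: sum.cong)
qed (auto simp: sum_distrib_left intro!: sum.cong)

lemma obs_equiv_iff_proportional:
  assumes "has_type None [] s A" and "has_type None [] t A"
  shows "obs_equiv A s t \<longleftrightarrow> proportional (den A) (sem s []) (sem t [])"
  using normalize_eq_if_proportional proportional_if_normalize_eq[OF finite_den]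
    sem_nonneg[OF assms(1)] sem_nonneg[OF assms(2)]
  by (auto simp: obs_equiv_def den_ctx_Nil)

lemma psl_equiv_if_sem_scaled:
  assumes s: "has_type None \<Gamma> s X" and t: "has_type None \<Gamma> t X" and "c > 0"
    and scale: "\<forall>\<gamma>\<in>den_ctx \<Gamma>. \<forall>y\<in>den X. sem s \<gamma> y = c * sem t \<gamma> y"
  shows "psl_equiv \<Gamma> X s t"
  unfolding psl_equiv_def
proof (intro allI impI)
  fix C A
  assume C: "has_type (Some (\<Gamma>, X)) [] C A \<and> holes C = 1"
  have "proportional (den A) (sem (plug C s) []) (sem (plug C t) [])"
    unfolding proportional_def using C scale \<open>c > 0\<close>
    by (intro exI[of _ c]) (auto intro: sem_plug_scale simp: den_ctx_Nil)
  then show "obs_equiv A (plug C s) (plug C t)"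
    using C by (simp add: obs_equiv_iff_proportional has_type_plug[OF _ s] has_type_plug[OF _ t])
qed

definition uniform :: "ty \<Rightarrow> tm" where
  "uniform A = Prim TUnit A (\<lambda>_ _. inverse (real (card (den A)))) TmUnit"

text \<open>\<open>let_uniform [A\<^sub>1, \<dots>, A\<^sub>k] b\<close> binds de Bruijn index \<open>i\<close> of \<open>b\<close> to a uniform sample of \<open>A\<^bsub>i+1\<^esub>\<close>,
  the innermost binder being \<open>A\<^sub>1\<close>.\<close>
fun let_uniform :: "ty list \<Rightarrow> tm \<Rightarrow> tm" where
  "let_uniform [] b = b"
| "let_uniform (A # As) b = let_uniform As (Let A (uniform A) b)"

fun uniform_weight :: "ty list \<Rightarrow> real" where
  "uniform_weight [] = 1"
| "uniform_weight (A # As) = inverse (real (card (den A))) * uniform_weight As"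

fun tuple_ty :: "ty list \<Rightarrow> ty" where
  "tuple_ty [] = TUnit"
| "tuple_ty (A # As) = Prod A (tuple_ty As)"

fun tuple_val :: "val list \<Rightarrow> val" where
  "tuple_val [] = VUnit"
| "tuple_val (a # as) = VPair a (tuple_val as)"

fun tuple_vars :: "ty list \<Rightarrow> nat \<Rightarrow> tm" where
  "tuple_vars [] i = TmUnit"
| "tuple_vars (A # As) i = TmPair (Var i) (tuple_vars As (Suc i))"

definition probe :: "ty list \<Rightarrow> tm" where
  "probe \<Gamma> = let_uniform \<Gamma> (TmPair (tuple_vars \<Gamma> 0) Hole)"

lemma has_type_uniform: "has_type H \<Gamma> (uniform A) A"
  unfolding uniform_def
proof (rule T_Prim)
  show "subprob_kernel TUnit A (\<lambda>_ _. inverse (real (card (den A))))"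
    by (cases "card (den A) = 0") (auto simp: subprob_kernel_def)
qed (auto intro: has_type.intros)

lemma has_type_let_uniform: "has_type H (As @ \<Gamma>) b B \<Longrightarrow> has_type H \<Gamma> (let_uniform As b) B"
  by (induction As arbitrary: b) (auto intro!: T_Let has_type_uniform)

lemma sem_let_uniform:
  "sem (let_uniform As b) \<delta> v = (\<Sum>\<gamma>\<in>den_ctx As. uniform_weight As * sem b (\<gamma> @ \<delta>) v)"
proof (induction As arbitrary: b)
  case Nil
  then show ?case
    by (simp add: den_ctx_Nil)
next
  case (Cons A As)
  have "sem (let_uniform (A # As) b) \<delta> v
      = (\<Sum>\<gamma>\<in>den_ctx As. \<Sum>a\<in>den A. uniform_weight (A # As) * sem b ((a # \<gamma>) @ \<delta>) v)"
    using Cons by (simp add: uniform_def sum_distrib_left mult.assoc mult.left_commute)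
  then show ?case
    by (simp add: sum_den_ctx_Cons)
qed

lemma uniform_weight_pos: "den_ctx As \<noteq> {} \<Longrightarrow> uniform_weight As > 0"
proof (induction As)
  case (Cons A As)
  then have "den A \<noteq> {}" "den_ctx As \<noteq> {}"
    by (auto simp: den_ctx_Cons)
  then show ?case
    using Cons finite_den by (simp add: card_gt_0_iff)
qed simp

lemma has_type_tuple_vars: "has_type H (pre @ As @ post) (tuple_vars As (length pre)) (tuple_ty As)"
proof (induction As arbitrary: pre)
  case (Cons A As)
  have "has_type H (pre @ A # As @ post) (Var (length pre)) A"
    using T_Var[of "length pre" "pre @ A # As @ post" H] by simp
  moreover have "has_type H ((pre @ [A]) @ As @ post) (tuple_vars As (length (pre @ [A]))) (tuple_ty As)"
    by (rule Cons)
  ultimately show ?case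
    by (auto intro!: T_Pair)
qed (auto intro: has_type.intros)

lemma sem_tuple_vars:
  "length as = length As \<Longrightarrow>
   sem (tuple_vars As (length pre)) (pre @ as @ post) v = (if v = tuple_val as then 1 else 0)"
proof (induction As arbitrary: pre as v)
  case (Cons A As)
  then obtain a as' where as: "as = a # as'" "length as' = length As"
    by (cases as) auto
  have "sem (tuple_vars As (length (pre @ [a]))) ((pre @ [a]) @ as' @ post) w
      = (if w = tuple_val as' then 1 else 0)" for w
    using Cons.IH as(2) .
  then show ?case
    using as by (cases v) auto
qed simp

lemma tuple_val_in_den: "\<gamma> \<in> den_ctx \<Gamma> \<Longrightarrow> tuple_val \<gamma> \<in> den (tuple_ty \<Gamma>)"
proof (induction \<Gamma> arbitrary: \<gamma>)
  case (Cons A \<Gamma>)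
  then show ?case
    by (cases \<gamma>) (auto simp: Cons_in_den_ctx_iff, simp add: den_ctx_def)
qed (simp add: den_ctx_Nil)

lemma inj_tuple_val: "inj tuple_val"
proof (rule injI)
  show "tuple_val as = tuple_val bs \<Longrightarrow> as = bs" for as bs
    by (induction as arbitrary: bs) (case_tac bs; simp)+
qed

lemma has_type_probe: "has_type (Some (\<Gamma>, X)) [] (probe \<Gamma>) (Prod (tuple_ty \<Gamma>) X)"
  unfolding probe_def
  using has_type_tuple_vars[of _ "[]" \<Gamma> "[]"]
  by (auto intro!: has_type_let_uniform T_Pair T_Hole)

lemma holes_probe: "holes (probe \<Gamma>) = 1"
proof -
  have "holes (let_uniform As b) = holes b" for As b
    by (induction As arbitrary: b) (auto simp: uniform_def)
  moreover have "holes (tuple_vars As i) = 0" for As i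
    by (induction As arbitrary: i) auto
  ultimately show ?thesis
    by (simp add: probe_def)
qed

lemma sem_plug_probe:
  assumes "\<gamma> \<in> den_ctx \<Gamma>"
  shows "sem (plug (probe \<Gamma>) s) [] (VPair (tuple_val \<gamma>) y) = uniform_weight \<Gamma> * sem s \<gamma> y"
proof -
  have plug_let_uniform: "plug (let_uniform As b) s = let_uniform As (plug b s)" for As b
    by (induction As arbitrary: b) (auto simp: uniform_def)
  have plug_tuple_vars: "plug (tuple_vars As i) s = tuple_vars As i" for As i
    by (induction As arbitrary: i) auto
  have sem_tuple: "sem (tuple_vars \<Gamma> 0) \<gamma>' w = (if w = tuple_val \<gamma>' then 1 else 0)"
    if "\<gamma>' \<in> den_ctx \<Gamma>" for \<gamma>' w
    using sem_tuple_vars[of \<gamma>' \<Gamma> "[]" "[]" w] that by (simp add: den_ctx_def)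
  have "sem (plug (probe \<Gamma>) s) [] (VPair (tuple_val \<gamma>) y)
      = (\<Sum>\<gamma>'\<in>den_ctx \<Gamma>. if \<gamma>' = \<gamma> then uniform_weight \<Gamma> * sem s \<gamma>' y else 0)"
    by (auto simp: probe_def plug_let_uniform plug_tuple_vars sem_let_uniform sem_tuple
        inj_eq[OF inj_tuple_val] intro!: sum.cong)
  then show ?thesis
    using assms finite_den_ctx by simp
qed

lemma sem_scaled_if_psl_equiv:
  assumes s: "has_type None \<Gamma> s X" and t: "has_type None \<Gamma> t X" and "psl_equiv \<Gamma> X s t"
  shows "\<exists>c>0. \<forall>\<gamma>\<in>den_ctx \<Gamma>. \<forall>y\<in>den X. sem s \<gamma> y = c * sem t \<gamma> y"
proof (cases "den_ctx \<Gamma> = {}")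
  case False
  have "obs_equiv (Prod (tuple_ty \<Gamma>) X) (plug (probe \<Gamma>) s) (plug (probe \<Gamma>) t)"
    using assms(3) has_type_probe holes_probe by (auto simp: psl_equiv_def)
  then obtain c where "c > 0" and scale:
    "\<forall>v\<in>den (Prod (tuple_ty \<Gamma>) X). sem (plug (probe \<Gamma>) s) [] v = c * sem (plug (probe \<Gamma>) t) [] v"
    by (auto simp: obs_equiv_iff_proportional has_type_plug[OF has_type_probe] s t proportional_def)
  have "sem s \<gamma> y = c * sem t \<gamma> y" if "\<gamma> \<in> den_ctx \<Gamma>" "y \<in> den X" for \<gamma> y
  proof -
    have "VPair (tuple_val \<gamma>) y \<in> den (Prod (tuple_ty \<Gamma>) X)"
      using tuple_val_in_den[OF that(1)] that(2) by simp
    then have "sem (plug (probe \<Gamma>) s) [] (VPair (tuple_val \<gamma>) y)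
        = c * sem (plug (probe \<Gamma>) t) [] (VPair (tuple_val \<gamma>) y)"
      using scale by blast
    then have "uniform_weight \<Gamma> * sem s \<gamma> y = uniform_weight \<Gamma> * (c * sem t \<gamma> y)"
      by (simp add: sem_plug_probe[OF that(1)])
    then show ?thesis
      using uniform_weight_pos[OF False] by simp
  qed
  then show ?thesis
    using \<open>c > 0\<close> by blast
qed (auto intro: exI[of _ 1])

theorem proposition6p11:
  fixes \<Gamma> :: "ty list" and n :: nat and s t :: tm
  assumes "has_type None \<Gamma> s (Fin n)" and "has_type None \<Gamma> t (Fin n)"
  shows "psl_equiv \<Gamma> (Fin n) s t \<longleftrightarrow>
         (\<exists>c::real. c > 0 \<and> ( \<forall>\<gamma>\<in>den_ctx \<Gamma>. \<forall>y\<in>den (Fin n). sem s \<gamma> y = c * sem t \<gamma> y))"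
  using psl_equiv_if_sem_scaled[OF assms] sem_scaled_if_psl_equiv[OF assms] by blast

end
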